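(* Let $t\ge1$, $k\ge t+1$, $v\ge 2$. If an OA$(t+1,k+1,v)$ exists, then a simple COA$_\lambda(t,k+t-1,v)$ exists for every positive integer $\lambda\le v$.
   Context: An OA$_\lambda(t,k,v)$ is a $\lambda v^t\times k$ array over a $v$-set $V$ such that every $t$ columns contain every $t$-tuple exactly $\lambda$ times; OA$(t,k,v)$ means $\lambda=1$. A COA$_\lambda(t,k,v)$ is a $\lambda v^t\times k$ array over $V$ in which every set of $t$ consecutive columns contains every $t$-tuple exactly $\lambda$ times. It is simple if for any two distinct sets of $t$ consecutive columns sharing exactly $i$ columns ($0\le i\le t-1$), the subarray on the $2t-i$ columns of their union contains each $(2t-i)$-tuple at most once. *)

theory Defs
  imports Main "HOL-Library.FuncSet"
begin

definition array_on :: "'a set \<Rightarrow> nat \<Rightarrow> nat \<Rightarrow> 'a list list \<Rightarrow> bool" where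
  "array_on V N k A \<longleftrightarrow> length A = N \<and> (\<forall>r\<in>set A. length r = k \<and> set r \<subseteq> V)"

definition tuple_count :: "'a list list \<Rightarrow> nat set \<Rightarrow> (nat \<Rightarrow> 'a) \<Rightarrow> nat" where
  "tuple_count A C f = length (filter (\<lambda>r. \<forall>c\<in>C. r ! c = f c) A)"

definition is_OA :: "nat \<Rightarrow> nat \<Rightarrow> nat \<Rightarrow> 'a set \<Rightarrow> 'a list list \<Rightarrow> bool" where
  "is_OA lam t k V A \<longleftrightarrow> finite V \<and> array_on V (lam * card V ^ t) k A \<and>
     (\<forall>C. C \<subseteq> {..<k} \<and> card C = t \<longrightarrow> (\<forall>f \<in> C \<rightarrow>\<^sub>E V. tuple_count A C f = lam))"

definition window :: "nat \<Rightarrow> nat \<Rightarrow> nat set" where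
  "window t i = {i..<i+t}"

definition is_COA :: "nat \<Rightarrow> nat \<Rightarrow> nat \<Rightarrow> 'a set \<Rightarrow> 'a list list \<Rightarrow> bool" where
  "is_COA lam t k V A \<longleftrightarrow> finite V \<and> array_on V (lam * card V ^ t) k A \<and>
     (\<forall>i. i + t \<le> k \<longrightarrow> (\<forall>f \<in> window t i \<rightarrow>\<^sub>E V. tuple_count A (window t i) f = lam))"

definition is_simple_COA :: "nat \<Rightarrow> nat \<Rightarrow> nat \<Rightarrow> 'a set \<Rightarrow> 'a list list \<Rightarrow> bool" where
  "is_simple_COA lam t k V A \<longleftrightarrow> is_COA lam t k V A \<and>
     (\<forall>i j. i + t \<le> k \<and> j + t \<le> k \<and> window t i \<noteq> window t j \<and>
            card (window t i \<inter> window t j) \<le> t - 1 \<longrightarrow>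
        (\<forall>f \<in> (window t i \<union> window t j) \<rightarrow>\<^sub>E V.
            tuple_count A (window t i \<union> window t j) f \<le> 1))"

end

theory Submission
  imports Defs
begin

text \<open>Keep the rows of the OA\<open>(t+1,k+1,v)\<close> whose last entry lies in a set \<open>L\<close> of \<open>\<lambda>\<close>
  symbols, drop the last column and append copies of the first \<open>t-1\<close> columns, so that new
  column \<open>c\<close> is old column \<open>c mod k\<close>. The \<open>t\<close> columns of a window are \<open>t\<close> distinct old
  columns; with the last old column they carry every \<open>(t+1)\<close>-tuple exactly once, so each
  \<open>t\<close>-tuple occurs once for each value in \<open>L\<close>. Two distinct windows together cover at least
  \<open>t+1\<close> distinct old columns, on which the OA has index one, whence simplicity.\<close>

lemma length_filter_eq_sum_fibres:
  assumes "finite S" "\<forall>x\<in>set xs. P x \<longrightarrow> g x \<in> S"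
  shows "length (filter P xs) = (\<Sum>s\<in>S. length (filter (\<lambda>x. g x = s \<and> P x) xs))"
  using assms(2)
proof (induction xs)
  case (Cons x xs)
  have "(\<Sum>s\<in>S. length (filter (\<lambda>y. g y = s \<and> P y) (x # xs))) =
        (\<Sum>s\<in>S. (if g x = s \<and> P x then 1 else 0) + length (filter (\<lambda>y. g y = s \<and> P y) xs))"
    by (intro sum.cong) auto
  moreover have "(\<Sum>s\<in>S. if g x = s \<and> P x then 1 else 0) = (if P x then 1 else (0::nat))"
    using Cons.prems assms(1) by (simp add: sum.delta)
  ultimately show ?case
    using Cons by (simp add: sum.distrib)
qed simp

lemma length_eq_sum_tuple_count:
  assumes "finite D" "finite V" "\<forall>r\<in>set A. \<forall>c\<in>D. r ! c \<in> V"
  shows "length A = (\<Sum>f\<in>D \<rightarrow>\<^sub>E V. tuple_count A D f)"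
proof -
  have "length A = (\<Sum>f\<in>D \<rightarrow>\<^sub>E V. length (filter (\<lambda>r. restrict ((!) r) D = f) A))"
    using length_filter_eq_sum_fibres[of "D \<rightarrow>\<^sub>E V" A "\<lambda>_. True" "\<lambda>r. restrict ((!) r) D"] assms
    by (auto simp: finite_PiE)
  also have "\<dots> = (\<Sum>f\<in>D \<rightarrow>\<^sub>E V. tuple_count A D f)"
    unfolding tuple_count_def
    by (intro sum.cong refl arg_cong[where f=length] filter_cong) (auto simp: fun_eq_iff PiE_def extensional_def)
  finally show ?thesis .
qed

lemma eq_if_mod_eq_nat:
  fixes a b k :: nat
  assumes "a mod k = b mod k" "a \<le> b" "b < a + k"
  shows "a = b"
proof (rule ccontr)
  assume "a \<noteq> b"
  then have "0 < b - a" "b - a < k" using assms(2,3) by auto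
  moreover have "k dvd b - a" by (metis assms(1,2) mod_eq_dvd_iff_nat)
  ultimately show False by (meson nat_dvd_not_less)
qed

lemma inj_on_mod_window:
  fixes k t :: nat
  assumes "t \<le> k"
  shows "inj_on (\<lambda>c. c mod k) (window t i)"
proof (rule inj_onI)
  fix a b assume ab: "a \<in> window t i" "b \<in> window t i" and eq: "a mod k = b mod k"
  show "a = b"
  proof (cases "a \<le> b")
    case True
    then show ?thesis using eq_if_mod_eq_nat[OF eq] ab assms by (simp add: window_def)
  next
    case False
    then show ?thesis using eq_if_mod_eq_nat[OF eq[symmetric]] ab assms by (simp add: window_def)
  qed
qed

lemma window_union_contains_mod_injective_subset:
  fixes i j k t :: nat
  assumes "0 < t" "i < j" "j < k" "t < k"
  obtains S where "S \<subseteq> window t i \<union> window t j" "card S = t + 1" "inj_on (\<lambda>c. c mod k) S"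
proof (cases "i + t \<le> j")
  case True
  let ?S = "insert j (window t i)"
  have "?S \<subseteq> window t i \<union> window t j"
    using assms(1) by (auto simp: window_def)
  moreover have "inj_on (\<lambda>c. c mod k) ?S"
    using True assms by (intro inj_onI) (auto simp: window_def)
  moreover have "card ?S = t + 1"
    using True by (simp add: window_def)
  ultimately show ?thesis
    using that by blast
next
  case False
  let ?S = "window (t + 1) (j - 1)"
  have "?S \<subseteq> window t i \<union> window t j"
    using False assms by (auto simp: window_def)
  moreover have "inj_on (\<lambda>c. c mod k) ?S"
    using assms(4) by (intro inj_on_mod_window) simp
  moreover have "card ?S = t + 1"
    by (simp add: window_def)
  ultimately show ?thesis
    using that by blast
qed

lemma OA_filter_le_one:
  assumes OA: "is_OA 1 t n V A" and T: "T \<subseteq> {..<n}" "card T = t"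
    and agree: "\<And>r1 r2. r1 \<in> set A \<Longrightarrow> r2 \<in> set A \<Longrightarrow> Q r1 \<Longrightarrow> Q r2 \<Longrightarrow> \<forall>x\<in>T. r1 ! x = r2 ! x"
  shows "length (filter Q A) \<le> 1"
proof (cases "\<exists>r0\<in>set A. Q r0")
  case True
  then obtain r0 where r0: "r0 \<in> set A" "Q r0" by blast
  let ?g = "restrict ((!) r0) T"
  have "length r0 = n" "set r0 \<subseteq> V"
    using OA r0 unfolding is_OA_def array_on_def by auto
  then have "?g \<in> T \<rightarrow>\<^sub>E V"
    using T nth_mem by fastforce
  then have "tuple_count A T ?g = 1"
    using OA T unfolding is_OA_def by auto
  moreover have "filter Q A = filter Q (filter (\<lambda>r. \<forall>x\<in>T. r ! x = ?g x) A)"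
    unfolding filter_filter using agree[OF _ r0(1) _ r0(2)] by (auto intro!: filter_cong)
  ultimately show ?thesis
    unfolding tuple_count_def by (metis length_filter_le)
qed (simp add: filter_empty_conv)

lemma OA_count_eq_one_insert_image:
  assumes OA: "is_OA 1 (t + 1) n V A"
    and W: "finite W" "card W = t" "inj_on h W" "h ` W \<subseteq> {..<n}"
    and m: "m < n" "m \<notin> h ` W"
    and f: "f \<in> W \<rightarrow>\<^sub>E V" and s: "s \<in> V"
  shows "length (filter (\<lambda>r. r ! m = s \<and> (\<forall>c\<in>W. r ! h c = f c)) A) = 1"
proof -
  define T where "T = insert m (h ` W)"
  define g where "g = restrict (\<lambda>x. if x = m then s else f (inv_into W h x)) T"
  have "card T = t + 1"
    using W m card_image[OF W(3)] by (simp add: T_def)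
  moreover have "T \<subseteq> {..<n}"
    using W m by (simp add: T_def)
  moreover have "g \<in> T \<rightarrow>\<^sub>E V"
    using f s m by (auto simp: g_def T_def inv_into_into)
  ultimately have "tuple_count A T g = 1"
    using OA unfolding is_OA_def by blast
  moreover have "(\<forall>x\<in>T. r ! x = g x) \<longleftrightarrow> r ! m = s \<and> (\<forall>c\<in>W. r ! h c = f c)" for r
    using m W by (auto simp: T_def g_def)
  ultimately show ?thesis
    unfolding tuple_count_def by simp
qed

definition cyclic_COA :: "nat \<Rightarrow> nat \<Rightarrow> 'a set \<Rightarrow> 'a list list \<Rightarrow> 'a list list" where
  "cyclic_COA t k L A =
     map (\<lambda>r. map (\<lambda>c. r ! (c mod k)) [0..<k + t - 1]) (filter (\<lambda>r. r ! k \<in> L) A)"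

lemma tuple_count_cyclic_COA:
  assumes "C \<subseteq> {..<k + t - 1}"
  shows "tuple_count (cyclic_COA t k L A) C f =
         length (filter (\<lambda>r. r ! k \<in> L \<and> (\<forall>c\<in>C. r ! (c mod k) = f c)) A)"
proof -
  have row_nth: "map (\<lambda>c. r ! (c mod k)) [0..<k + t - 1] ! c = r ! (c mod k)" if "c \<in> C" for r c
    using assms that by auto
  have "(\<forall>c\<in>C. map (\<lambda>c. r ! (c mod k)) [0..<k + t - 1] ! c = f c) \<longleftrightarrow>
             (\<forall>c\<in>C. r ! (c mod k) = f c)" for r
    by (intro ball_cong[OF refl]) (simp only: row_nth)
  then show ?thesis
    unfolding cyclic_COA_def tuple_count_def filter_map length_map filter_filter o_def by simp
qed

lemma cyclic_COA_rows:
  assumes "is_OA 1 (t + 1) (k + 1) V A" "0 < k"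
  shows "\<forall>r\<in>set (cyclic_COA t k L A). length r = k + t - 1 \<and> set r \<subseteq> V"
proof
  fix r assume "r \<in> set (cyclic_COA t k L A)"
  then obtain a where a: "a \<in> set A" "r = map (\<lambda>c. a ! (c mod k)) [0..<k + t - 1]"
    unfolding cyclic_COA_def by auto
  have "length a = k + 1" "set a \<subseteq> V"
    using assms(1) a(1) unfolding is_OA_def array_on_def by auto
  then have "a ! (c mod k) \<in> V" for c
    using assms(2) nth_mem[of "c mod k" a] by (simp add: less_SucI subset_iff)
  then show "length r = k + t - 1 \<and> set r \<subseteq> V"
    using a(2) by auto
qed

lemma cyclic_COA_window_count:
  assumes OA: "is_OA 1 (t + 1) (k + 1) V A"
    and "0 < k" "t \<le> k" "L \<subseteq> V" "i + t \<le> k + t - 1" and f: "f \<in> window t i \<rightarrow>\<^sub>E V"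
  shows "tuple_count (cyclic_COA t k L A) (window t i) f = card L"
proof -
  let ?Q = "\<lambda>r. \<forall>c\<in>window t i. r ! (c mod k) = f c"
  have "finite L"
    using OA assms(4) finite_subset unfolding is_OA_def by blast
  have "tuple_count (cyclic_COA t k L A) (window t i) f = length (filter (\<lambda>r. r ! k \<in> L \<and> ?Q r) A)"
    using assms(5) by (intro tuple_count_cyclic_COA) (auto simp: window_def)
  also have "\<dots> = (\<Sum>s\<in>L. length (filter (\<lambda>r. r ! k = s \<and> r ! k \<in> L \<and> ?Q r) A))"
    using \<open>finite L\<close> by (rule length_filter_eq_sum_fibres) auto
  also have "\<dots> = (\<Sum>s\<in>L. length (filter (\<lambda>r. r ! k = s \<and> ?Q r) A))"
    by (intro sum.cong refl arg_cong[where f=length] filter_cong) auto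
  also have "\<dots> = (\<Sum>s\<in>L. 1)"
  proof (intro sum.cong refl OA_count_eq_one_insert_image[OF OA])
    show "inj_on (\<lambda>c. c mod k) (window t i)"
      using assms(3) by (rule inj_on_mod_window)
    have "c mod k < k" for c
      using assms(2) by simp
    then show "(\<lambda>c. c mod k) ` window t i \<subseteq> {..<k + 1}" "k \<notin> (\<lambda>c. c mod k) ` window t i"
      by (auto intro: less_SucI) (metis less_irrefl)
  qed (use f assms(4) in \<open>auto simp: window_def\<close>)
  finally show ?thesis
    by simp
qed

lemma cyclic_COA_union_count_le_one:
  assumes OA: "is_OA 1 (t + 1) (k + 1) V A"
    and "0 < t" "t < k" "i < j" "j + t \<le> k + t - 1"
  shows "tuple_count (cyclic_COA t k L A) (window t i \<union> window t j) f \<le> 1"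
proof -
  let ?U = "window t i \<union> window t j"
  let ?Q = "\<lambda>r. \<forall>c\<in>?U. r ! (c mod k) = f c"
  have "j < k"
    using assms(2,5) by linarith
  then obtain S where S: "S \<subseteq> ?U" "card S = t + 1" "inj_on (\<lambda>c. c mod k) S"
    using window_union_contains_mod_injective_subset[of t i j k] assms by auto
  have "tuple_count (cyclic_COA t k L A) ?U f = length (filter (\<lambda>r. r ! k \<in> L \<and> ?Q r) A)"
    using assms by (intro tuple_count_cyclic_COA) (auto simp: window_def)
  also have "\<dots> = length (filter (\<lambda>r. r ! k \<in> L) (filter ?Q A))"
    by (simp add: filter_filter conj_commute)
  also have "\<dots> \<le> length (filter ?Q A)"
    by (rule length_filter_le)
  also have "\<dots> \<le> 1"
  proof (rule OA_filter_le_one[OF OA])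
    show "(\<lambda>c. c mod k) ` S \<subseteq> {..<k + 1}"
      using \<open>j < k\<close> by (auto intro: less_SucI)
    show "card ((\<lambda>c. c mod k) ` S) = t + 1"
      using S by (simp add: card_image)
    show "\<forall>x\<in>(\<lambda>c. c mod k) ` S. r1 ! x = r2 ! x" if "?Q r1" "?Q r2" for r1 r2
      using that S(1) by fastforce
  qed
  finally show ?thesis .
qed

lemma is_simple_COA_cyclic_COA:
  assumes OA: "is_OA 1 (t + 1) (k + 1) V A" and "0 < t" "t < k" "L \<subseteq> V"
  shows "is_simple_COA (card L) t (k + t - 1) V (cyclic_COA t k L A)"
proof -
  let ?B = "cyclic_COA t k L A"
  have V: "finite V"
    using OA unfolding is_OA_def by blast
  have rows: "\<forall>r\<in>set ?B. length r = k + t - 1 \<and> set r \<subseteq> V"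
    using OA assms(3) by (intro cyclic_COA_rows) auto
  have windows: "\<forall>f\<in>window t i \<rightarrow>\<^sub>E V. tuple_count ?B (window t i) f = card L"
    if "i + t \<le> k + t - 1" for i
    using cyclic_COA_window_count[OF OA] assms that by auto
  have "\<forall>r\<in>set ?B. \<forall>c\<in>window t 0. r ! c \<in> V"
  proof (intro ballI)
    fix r c assume r: "r \<in> set ?B" and c: "c \<in> window t 0"
    have "c < length r"
      using rows r c assms(3) by (auto simp: window_def)
    then show "r ! c \<in> V"
      using rows r nth_mem by blast
  qed
  then have "length ?B = (\<Sum>f\<in>window t 0 \<rightarrow>\<^sub>E V. tuple_count ?B (window t 0) f)"
    using V by (intro length_eq_sum_tuple_count) (auto simp: window_def)
  also have "\<dots> = card L * card V ^ t"
    using windows[of 0] assms(3) by (simp add: card_PiE window_def)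
  finally have "length ?B = card L * card V ^ t" .
  moreover have "tuple_count ?B (window t i \<union> window t j) f \<le> 1"
    if "i + t \<le> k + t - 1" "j + t \<le> k + t - 1" "window t i \<noteq> window t j" for i j f
    using that cyclic_COA_union_count_le_one[OF OA, of i j] cyclic_COA_union_count_le_one[OF OA, of j i]
      assms(2,3) by (cases i j rule: linorder_cases) (auto simp: Un_commute)
  ultimately show ?thesis
    unfolding is_simple_COA_def is_COA_def array_on_def using V rows windows by blast
qed

theorem mainTheorem6:
  fixes t k v :: nat
  assumes "t \<ge> 1" and "k \<ge> t + 1" and "v \<ge> 2"
    and "\<exists>A. is_OA 1 (t + 1) (k + 1) {..<v} A"
  shows "\<forall>lam. 0 < lam \<and> lam \<le> v \<longrightarrow>
           (\<exists>B. is_simple_COA lam t (k + t - 1) {..<v} B)"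
proof (intro allI impI)
  fix lam :: nat
  assume "0 < lam \<and> lam \<le> v"
  moreover obtain A where "is_OA 1 (t + 1) (k + 1) {..<v} A"
    using assms(4) by blast
  ultimately have "is_simple_COA (card {..<lam}) t (k + t - 1) {..<v} (cyclic_COA t k {..<lam} A)"
    using assms(1,2) by (intro is_simple_COA_cyclic_COA) auto
  then show "\<exists>B. is_simple_COA lam t (k + t - 1) {..<v} B"
    by auto
qed

end
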